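(* Let $A$ be a general metric space, $\mathcal F_1$ a Cauchy filter and $\mathcal F_2$ a weakly flat filter on $A$. Then $$\sup_{x\in A}[M^-(\mathcal F_1)(x),M^-(\mathcal F_2)(x)]=\lim^-_{y\in\mathcal F_2}\lim^+_{x\in\mathcal F_1}A(x,y).$$
   Context: $[0,\infty]$ with $+$, $[x,y]=\max(y-x,0)$ for finite $x,y$, $[x,\infty]=\infty$ for $x<\infty$, $[\infty,y]=0$; $\inf\emptyset=\infty$, $\sup\emptyset=0$. A general metric space $A$ is a set with $A(-,-):A\times A\to[0,\infty]$, $A(x,x)=0$, $A(x,z)\le A(x,y)+A(y,z)$ (no symmetry). A filter on $A$ is a nonempty set of nonempty subsets closed under finite intersections and supersets; $\lim^+_{\mathcal F}t=\inf_{f\in\mathcal F}\sup_{x\in f}t(x)$, $\lim^-_{\mathcal F}t=\sup_{f\in\mathcal F}\inf_{x\in f}t(x)$; $M^-(\mathcal F)(x)=\lim^-_{y\in\mathcal F}A(x,y)$. $\mathcal F$ is Cauchy iff $\inf_{f\in\mathcal F}\sup_{x,y\in f}A(x,y)=0$; weakly flat iff $\lim^+_{\mathcal F}M^-(\mathcal F)=0$. *)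

theory Defs
  imports "HOL-Library.Extended_Nonnegative_Real" "HOL-Library.Liminf_Limsup"
begin

definition gen_metric :: "('a \<Rightarrow> 'a \<Rightarrow> ennreal) \<Rightarrow> bool" where
  "gen_metric d \<longleftrightarrow> (\<forall>x. d x x = 0) \<and> (\<forall>x y z. d x z \<le> d x y + d y z)"

text \<open>Truncated subtraction [x,y] on [0,\<infinity>]: [\<infinity>,y] = 0, otherwise max(y-x,0)
  (with [x,\<infinity>] = \<infinity> for finite x).\<close>
definition tdiff :: "ennreal \<Rightarrow> ennreal \<Rightarrow> ennreal" where
  "tdiff x y = (if x = \<infinity> then 0 else y - x)"

text \<open>lim^+_F t = Limsup F t, lim^-_F t = Liminf F t (library notions).\<close>
definition Mminus :: "('a \<Rightarrow> 'a \<Rightarrow> ennreal) \<Rightarrow> 'a filter \<Rightarrow> 'a \<Rightarrow> ennreal" where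
  "Mminus d F x = Liminf F (\<lambda>y. d x y)"

definition cauchy_filter :: "('a \<Rightarrow> 'a \<Rightarrow> ennreal) \<Rightarrow> 'a filter \<Rightarrow> bool" where
  "cauchy_filter d F \<longleftrightarrow>
     (INF P\<in>{P. eventually P F}. SUP x\<in>Collect P. SUP y\<in>Collect P. d x y) = 0"

definition weakly_flat :: "('a \<Rightarrow> 'a \<Rightarrow> ennreal) \<Rightarrow> 'a filter \<Rightarrow> bool" where
  "weakly_flat d F \<longleftrightarrow> Limsup F (Mminus d F) = 0"

end

theory Submission
  imports Defs
begin

text \<open>If \<open>x\<close> lies in a small enough member of the Cauchy filter \<open>F\<^sub>1\<close>, the triangle
  inequality shows that \<open>y \<mapsto> lim\<^sup>+\<^sub>z\<^sub>\<in>\<^sub>F\<^sub>1 d z y\<close> agrees with \<open>d x y\<close> up to \<open>\<epsilon>\<close>.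
  Passing through such an \<open>x\<close>, every \<open>x'\<close> satisfies
  \<open>M\<^sup>-(F\<^sub>2)(x') \<le> M\<^sup>-(F\<^sub>1)(x') + lim\<^sup>-\<^sub>F\<^sub>2 lim\<^sup>+\<^sub>F\<^sub>1 d\<close>, which gives \<open>\<le>\<close>; and \<open>x\<close> itself has
  \<open>M\<^sup>-(F\<^sub>1)(x) \<le> \<epsilon>\<close> and \<open>lim\<^sup>-\<^sub>F\<^sub>2 lim\<^sup>+\<^sub>F\<^sub>1 d \<le> \<epsilon> + M\<^sup>-(F\<^sub>2)(x)\<close>, which gives \<open>\<ge>\<close>.\<close>

lemma tdiff_le_iff: "tdiff a b \<le> c \<longleftrightarrow> b \<le> a + c"
  by (auto simp: tdiff_def ennreal_minus_le_iff)

lemma le_add_tdiff: "b \<le> a + tdiff a b"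
  using tdiff_le_iff by blast

lemma cauchy_filterE:
  assumes "cauchy_filter d F" "0 < e"
  obtains P where "eventually P F" "\<And>x y. P x \<Longrightarrow> P y \<Longrightarrow> d x y \<le> e"
proof -
  have "(INF P\<in>{P. eventually P F}. SUP x\<in>Collect P. SUP y\<in>Collect P. d x y) < e"
    using assms unfolding cauchy_filter_def by simp
  then obtain P where "eventually P F" and diam: "(SUP x\<in>Collect P. SUP y\<in>Collect P. d x y) < e"
    by (auto simp: INF_less_iff)
  moreover have "d x y \<le> e" if "P x" "P y" for x y
  proof -
    have "d x y \<le> (SUP y\<in>Collect P. d x y)"
      using \<open>P y\<close> by (auto intro: SUP_upper)
    also have "\<dots> \<le> (SUP x\<in>Collect P. SUP y\<in>Collect P. d x y)"
      using \<open>P x\<close> by (auto intro: SUP_upper)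
    finally show ?thesis
      using diam by simp
  qed
  ultimately show thesis using that by blast
qed

lemma Limsup_dist_le_add:
  assumes "gen_metric d" "eventually (\<lambda>z. d z x \<le> e) F"
  shows "Limsup F (\<lambda>z. d z y) \<le> e + d x y"
proof (rule Limsup_bounded)
  show "eventually (\<lambda>z. d z y \<le> e + d x y) F"
    using assms(2) by eventually_elim
      (use assms(1) in \<open>meson add_right_mono gen_metric_def order_trans\<close>)
qed

lemma dist_le_add_Limsup:
  assumes "gen_metric d" "F \<noteq> bot" "eventually (\<lambda>z. d x z \<le> e) F"
  shows "d x y \<le> e + Limsup F (\<lambda>z. d z y)"
proof (cases "e = top")
  case False
  have "eventually (\<lambda>z. d x y - e \<le> d z y) F"
    using assms(3)
  proof eventually_elim
    case (elim z)
    then have "d x y \<le> e + d z y"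
      using assms(1) unfolding gen_metric_def by (meson add_right_mono order_trans)
    then show ?case
      using False by (simp add: ennreal_minus_le_iff)
  qed
  then have "d x y - e \<le> Limsup F (\<lambda>z. d z y)"
    by (rule le_Limsup[OF assms(2)])
  then show ?thesis
    using False by (simp add: ennreal_minus_le_iff)
qed simp

lemma Mminus_le_add_Liminf_Limsup:
  assumes "gen_metric d" "F\<^sub>1 \<noteq> bot" "F\<^sub>2 \<noteq> bot" "cauchy_filter d F\<^sub>1"
  shows "Mminus d F\<^sub>2 x \<le> Mminus d F\<^sub>1 x + Liminf F\<^sub>2 (\<lambda>y. Limsup F\<^sub>1 (\<lambda>z. d z y))"
    (is "_ \<le> _ + ?R")
proof (rule ennreal_le_epsilon)
  fix e :: real
  assume "0 < e"
  then obtain P where P: "eventually P F\<^sub>1" "\<And>x y. P x \<Longrightarrow> P y \<Longrightarrow> d x y \<le> ennreal e"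
    using cauchy_filterE[OF assms(4)] by (metis ennreal_less_zero_iff)
  have "eventually (\<lambda>z. Mminus d F\<^sub>2 x \<le> d x z + (ennreal e + ?R)) F\<^sub>1"
    using P(1)
  proof eventually_elim
    case (elim z)
    have "d x y \<le> d x z + (ennreal e + Limsup F\<^sub>1 (\<lambda>w. d w y))" for y
    proof -
      have "d z y \<le> ennreal e + Limsup F\<^sub>1 (\<lambda>w. d w y)"
        using P elim by (intro dist_le_add_Limsup[OF assms(1,2)]) (auto elim: eventually_mono)
      then show ?thesis
        using assms(1) unfolding gen_metric_def by (meson add_left_mono order_trans)
    qed
    then have "Mminus d F\<^sub>2 x \<le> Liminf F\<^sub>2 (\<lambda>y. d x z + (ennreal e + Limsup F\<^sub>1 (\<lambda>w. d w y)))"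
      unfolding Mminus_def by (intro Liminf_mono always_eventually) auto
    also have "\<dots> = d x z + (ennreal e + ?R)"
      using assms(3) by (simp add: Liminf_const_add)
    finally show ?case .
  qed
  then have "Mminus d F\<^sub>2 x \<le> Liminf F\<^sub>1 (\<lambda>z. d x z + (ennreal e + ?R))"
    by (rule Liminf_bounded)
  also have "\<dots> = Mminus d F\<^sub>1 x + ?R + ennreal e"
    by (simp only: Mminus_def Liminf_add_const[OF assms(2)]) (simp add: ac_simps)
  finally show "Mminus d F\<^sub>2 x \<le> Mminus d F\<^sub>1 x + ?R + ennreal e" .
qed

lemma Liminf_Limsup_le_add_tdiff:
  assumes "gen_metric d" "F\<^sub>1 \<noteq> bot" "F\<^sub>2 \<noteq> bot" "cauchy_filter d F\<^sub>1" "0 < e"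
  obtains x where "Liminf F\<^sub>2 (\<lambda>y. Limsup F\<^sub>1 (\<lambda>z. d z y))
                     \<le> ennreal e + tdiff (Mminus d F\<^sub>1 x) (Mminus d F\<^sub>2 x)"
proof -
  obtain P where P: "eventually P F\<^sub>1" "\<And>x y. P x \<Longrightarrow> P y \<Longrightarrow> d x y \<le> ennreal (e / 2)"
    using cauchy_filterE[OF assms(4)] assms(5) by (metis ennreal_less_zero_iff half_gt_zero)
  obtain x where "P x"
    using eventually_happens[OF P(1)] assms(2) by auto
  have near: "eventually (\<lambda>z. d z x \<le> ennreal (e / 2)) F\<^sub>1"
    "eventually (\<lambda>z. d x z \<le> ennreal (e / 2)) F\<^sub>1"
    using P(1) by (auto elim!: eventually_mono intro: P(2) \<open>P x\<close>)
  have "Mminus d F\<^sub>1 x \<le> ennreal (e / 2)"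
    unfolding Mminus_def using assms(2) near(2) by (rule Liminf_le)
  have "Liminf F\<^sub>2 (\<lambda>y. Limsup F\<^sub>1 (\<lambda>z. d z y)) \<le> Liminf F\<^sub>2 (\<lambda>y. ennreal (e / 2) + d x y)"
    by (intro Liminf_mono always_eventually allI Limsup_dist_le_add[OF assms(1) near(1)])
  also have "\<dots> = ennreal (e / 2) + Mminus d F\<^sub>2 x"
    using assms(3) by (simp add: Mminus_def Liminf_const_add)
  also have "\<dots> \<le> ennreal (e / 2) + (Mminus d F\<^sub>1 x + tdiff (Mminus d F\<^sub>1 x) (Mminus d F\<^sub>2 x))"
    by (intro add_left_mono le_add_tdiff)
  also have "\<dots> \<le> ennreal (e / 2) + (ennreal (e / 2) + tdiff (Mminus d F\<^sub>1 x) (Mminus d F\<^sub>2 x))"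
    using \<open>Mminus d F\<^sub>1 x \<le> ennreal (e / 2)\<close> by (intro add_left_mono add_right_mono)
  also have "\<dots> = ennreal e + tdiff (Mminus d F\<^sub>1 x) (Mminus d F\<^sub>2 x)"
    using assms(5) by (simp add: add.assoc[symmetric] flip: ennreal_plus)
  finally show thesis
    by (rule that)
qed

theorem mainTheorem16:
  fixes d :: "'a \<Rightarrow> 'a \<Rightarrow> ennreal" and F1 F2 :: "'a filter"
  assumes "gen_metric d"
    and "F1 \<noteq> bot" and "F2 \<noteq> bot"
    and "cauchy_filter d F1"
    and "weakly_flat d F2"
  shows "(SUP x. tdiff (Mminus d F1 x) (Mminus d F2 x))
           = Liminf F2 (\<lambda>y. Limsup F1 (\<lambda>x. d x y))"
proof (rule antisym)
  show "(SUP x. tdiff (Mminus d F1 x) (Mminus d F2 x)) \<le> Liminf F2 (\<lambda>y. Limsup F1 (\<lambda>x. d x y))"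
    using Mminus_le_add_Liminf_Limsup[OF assms(1-4)] by (intro SUP_least) (simp add: tdiff_le_iff)
next
  show "Liminf F2 (\<lambda>y. Limsup F1 (\<lambda>x. d x y)) \<le> (SUP x. tdiff (Mminus d F1 x) (Mminus d F2 x))"
  proof (rule ennreal_le_epsilon)
    fix e :: real
    assume "0 < e"
    then obtain x where "Liminf F2 (\<lambda>y. Limsup F1 (\<lambda>z. d z y))
                           \<le> ennreal e + tdiff (Mminus d F1 x) (Mminus d F2 x)"
      by (rule Liminf_Limsup_le_add_tdiff[OF assms(1-4)])
    also have "\<dots> \<le> ennreal e + (SUP x. tdiff (Mminus d F1 x) (Mminus d F2 x))"
      by (intro add_left_mono SUP_upper) simp
    finally show "Liminf F2 (\<lambda>y. Limsup F1 (\<lambda>x. d x y))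
                    \<le> (SUP x. tdiff (Mminus d F1 x) (Mminus d F2 x)) + ennreal e"
      by (simp add: add.commute)
  qed
qed

end
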